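(* Let $e=2$ and $\Lambda=\Lambda_0$. If $\lambda$ is an alternating $2$-regular partition whose last (smallest nonzero) part is odd, then the element $b_\lambda\in B(\Lambda_0)$ labelled by $\lambda$ is external.
   Context: Setting (level one, $e=2$). Let $\mathfrak g$ be the affine Lie algebra of type $A^{(1)}_1$ with simple roots $\alpha_0,\alpha_1$, simple coroots $h_0,h_1$, fundamental weights $\Lambda_0,\Lambda_1$ and null root $\delta=\alpha_0+\alpha_1$. $B(\Lambda_0)$ is the crystal of the irreducible integrable highest weight module $V(\Lambda_0)$, with Kashiwara operators $\tilde e_i,\tilde f_i$ ($i\in\{0,1\}$). Its elements are labelled by $2$-regular partitions (partitions with distinct parts) in the standard Misra–Miwa/Kleshchev realization with the $e$-regular convention: the node in row $x$, column $y$ of a Young diagram has residue $(y-x)\bmod 2$, the weight of $\lambda$ is $\Lambda_0-\sum_{\text{nodes}}\alpha_{\mathrm{res}}$, and $\tilde f_i$ adds a good $i$-node. A $2$-regular partition is \emph{alternating} if the parities of its consecutive nonzero parts alternate between odd and even. For $b\in B(\Lambda)$, the hub of $b$ is $\theta(b)=(\theta_0,\theta_1)$ with $\theta_i=\langle \mathrm{wt}(b),h_i\rangle$. An element $b$ is \emph{external} if for every $i$ with $\theta_i\ge 0$ one has $\tilde e_i(b)=0$. *)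

theory Defs
  imports Main
begin

text \<open>Misra--Miwa / Kleshchev realization of the crystal B(Lambda_0) of type A_1^(1)
  (e = 2) on 2-regular partitions.  A partition is a list of positive parts in
  strictly decreasing order; the part in (0-indexed) list position r is row r+1
  of the Young diagram.  Residues i range over {0,1} (as naturals).\<close>

definition two_regular :: "nat list \<Rightarrow> bool" where
  "two_regular lam \<longleftrightarrow> sorted_wrt (>) lam \<and> 0 \<notin> set lam"

definition alternating :: "nat list \<Rightarrow> bool" where
  "alternating lam \<longleftrightarrow> (\<forall>k. Suc k < length lam \<longrightarrow> odd (lam ! k) \<noteq> odd (lam ! Suc k))"

definition part :: "nat list \<Rightarrow> nat \<Rightarrow> nat" where
  "part lam r = (if r < length lam then lam ! r else 0)"

text \<open>residue of the node in row x = r+1, column y: (y - x) mod 2\<close>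
definition res :: "nat \<Rightarrow> nat \<Rightarrow> nat" where
  "res r y = nat ((int y - int (Suc r)) mod 2)"

definition removable_row :: "nat list \<Rightarrow> nat \<Rightarrow> bool" where
  "removable_row lam r \<longleftrightarrow> r < length lam \<and> part lam (Suc r) < part lam r"

definition addable_row :: "nat list \<Rightarrow> nat \<Rightarrow> bool" where
  "addable_row lam r \<longleftrightarrow> r \<le> length lam \<and> (r = 0 \<or> part lam r < part lam (r - 1))"

text \<open>i-signature: read rows from bottom to top; (True, r) is the addable i-node
  of row r (a "+"), (False, r) the removable i-node of row r (a "-").\<close>
definition row_sig :: "nat \<Rightarrow> nat list \<Rightarrow> nat \<Rightarrow> (bool \<times> nat) list" where
  "row_sig i lam r =
     (if addable_row lam r \<and> res r (Suc (part lam r)) = i then [(True, r)] else []) @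
     (if removable_row lam r \<and> res r (part lam r) = i then [(False, r)] else [])"

definition signature :: "nat \<Rightarrow> nat list \<Rightarrow> (bool \<times> nat) list" where
  "signature i lam = concat (map (row_sig i lam) (rev [0..<Suc (length lam)]))"

text \<open>reduced signature: successively cancel adjacent pairs "-+" (a removable node
  followed by an addable node further up).\<close>
fun red_step :: "(bool \<times> nat) list \<Rightarrow> bool \<times> nat \<Rightarrow> (bool \<times> nat) list" where
  "red_step st (True, r) = (if st \<noteq> [] \<and> \<not> fst (last st) then butlast st else st @ [(True, r)])"
| "red_step st (False, r) = st @ [(False, r)]"

definition reduced_signature :: "nat \<Rightarrow> nat list \<Rightarrow> (bool \<times> nat) list" where
  "reduced_signature i lam = foldl red_step [] (signature i lam)"

text \<open>Kashiwara operator e_i: remove the good removable i-node (the lowest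
  uncancelled "-"); None stands for 0.\<close>
definition kash_e :: "nat \<Rightarrow> nat list \<Rightarrow> nat list option" where
  "kash_e i lam = (case find (\<lambda>p. \<not> fst p) (reduced_signature i lam) of
       None \<Rightarrow> None
     | Some p \<Rightarrow> Some (filter (\<lambda>x. 0 < x) (lam[snd p := lam ! snd p - 1])))"

definition count_res :: "nat \<Rightarrow> nat list \<Rightarrow> nat" where
  "count_res i lam = card {(r, y). r < length lam \<and> 1 \<le> y \<and> y \<le> lam ! r \<and> res r y = i}"

definition cartan :: "nat \<Rightarrow> nat \<Rightarrow> int" where
  "cartan i j = (if i = j then 2 else -2)"

text \<open>hub component theta_i = <wt(lam), h_i>, wt = Lambda_0 - sum over nodes alpha_res\<close>
definition hub :: "nat \<Rightarrow> nat list \<Rightarrow> int" where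
  "hub i lam = (if i = 0 then 1 else 0) - (\<Sum>j\<in>{0,1}. cartan i j * int (count_res j lam))"

definition external :: "nat list \<Rightarrow> bool" where
  "external lam \<longleftrightarrow> (\<forall>i\<in>{0,1}. 0 \<le> hub i lam \<longrightarrow> kash_e i lam = None)"

end

theory Submission
  imports Defs
begin

text \<open>In an alternating partition whose last part is odd, the parity of the part in row r
  is forced: part r + r is congruent to the number of rows. Hence every removable node has
  the same residue i, so e_i kills the partition, while the hub component of i is negative:
  the rows of odd length (and only they) contribute to the residue imbalance
  count_res 0 - count_res 1, each with the same sign, and there is at least one of them.\<close>

lemma res_eq: "res r y = (if even (y + r) then 1 else 0)"
proof -
  have "(int y - int (Suc r)) mod 2 = (if even (y + r) then 1 else 0)"
    by (cases "even (y + r)") (auto elim!: evenE oddE simp: algebra_simps, presburger+)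
  then show ?thesis
    unfolding res_def by simp
qed

definition row_res_count :: "nat \<Rightarrow> nat \<Rightarrow> nat \<Rightarrow> nat" where
  "row_res_count r a i = card {y. 1 \<le> y \<and> y \<le> a \<and> res r y = i}"

lemma count_res_eq_sum: "count_res i lam = (\<Sum>r<length lam. row_res_count r (lam ! r) i)"
proof -
  have "{(r, y). r < length lam \<and> 1 \<le> y \<and> y \<le> lam ! r \<and> res r y = i}
      = (SIGMA r:{..<length lam}. {y. 1 \<le> y \<and> y \<le> lam ! r \<and> res r y = i})"
    by auto
  then show ?thesis
    unfolding count_res_def row_res_count_def by (simp add: card_SigmaI)
qed

lemma row_res_count_Suc:
  "row_res_count r (Suc a) i = row_res_count r a i + (if res r (Suc a) = i then 1 else 0)"
proof -
  have "{y. 1 \<le> y \<and> y \<le> Suc a \<and> res r y = i}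
      = {y. 1 \<le> y \<and> y \<le> a \<and> res r y = i} \<union> (if res r (Suc a) = i then {Suc a} else {})"
    by (auto simp: le_Suc_eq)
  then show ?thesis
    unfolding row_res_count_def by (simp add: card_insert_if)
qed

text \<open>The residues along a row alternate, so a row of even length is balanced.\<close>
lemma row_res_imbalance:
  "int (row_res_count r a 0) - int (row_res_count r a 1)
     = (if even a then 0 else if even r then 1 else -1)"
proof (induction a)
  case 0
  have "{y. 1 \<le> y \<and> y \<le> (0::nat) \<and> res r y = i} = {}" for i
    by auto
  then show ?case
    unfolding row_res_count_def by (simp only: card.empty) simp
next
  case (Suc a)
  then show ?case
    by (cases "even a"; cases "even r") (simp_all add: row_res_count_Suc res_eq)
qed

definition res_imbalance :: "nat list \<Rightarrow> int" where
  "res_imbalance lam = int (count_res 0 lam) - int (count_res 1 lam)"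

lemma hub_0_eq: "hub 0 lam = 1 - 2 * res_imbalance lam"
  and hub_1_eq: "hub 1 lam = 2 * res_imbalance lam"
  unfolding hub_def res_imbalance_def cartan_def by simp_all

lemma res_imbalance_eq_sum:
  "res_imbalance lam
     = (\<Sum>r<length lam. if even (lam ! r) then 0 else if even r then 1 else -1)"
  unfolding res_imbalance_def count_res_eq_sum
  by (simp only: of_nat_sum sum_subtractf[symmetric] row_res_imbalance)

lemma alternating_parity:
  assumes "alternating lam" "lam \<noteq> []" "odd (last lam)" "r < length lam"
  shows "even (lam ! r + r) \<longleftrightarrow> even (length lam)"
  using assms(4)
proof (induction r rule: strict_inc_induct)
  case (base r)
  then show ?case
    using assms(2,3) by (simp add: last_conv_nth)
next
  case (step r)
  then have "odd (lam ! r) \<noteq> odd (lam ! Suc r)"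
    using assms(1) unfolding alternating_def by simp
  then show ?case
    using step.IH by presburger
qed

lemma res_imbalance_alternating:
  assumes "alternating lam" "lam \<noteq> []" "odd (last lam)"
  shows "res_imbalance lam
           = (if even (length lam) then -1 else 1) * int (card {r. r < length lam \<and> odd (lam ! r)})"
proof -
  let ?s = "if even (length lam) then -1 else 1 :: int"
  have "(if even (lam ! r) then 0 else if even r then 1 else -1) = (if odd (lam ! r) then ?s else 0)"
    if "r < length lam" for r
    using alternating_parity[OF assms that] by auto
  then have "res_imbalance lam = (\<Sum>r<length lam. if odd (lam ! r) then ?s else 0)"
    unfolding res_imbalance_eq_sum by (intro sum.cong) auto
  also have "\<dots> = (\<Sum>r\<in>{r \<in> {..<length lam}. odd (lam ! r)}. ?s)"
    by (simp add: sum.inter_filter[symmetric])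
  also have "{r \<in> {..<length lam}. odd (lam ! r)} = {r. r < length lam \<and> odd (lam ! r)}"
    by auto
  finally show ?thesis
    by (simp add: mult.commute)
qed

lemma card_odd_parts_pos:
  assumes "lam \<noteq> []" "odd (last lam)"
  shows "card {r. r < length lam \<and> odd (lam ! r)} > 0"
proof -
  have "length lam - 1 \<in> {r. r < length lam \<and> odd (lam ! r)}"
    using assms by (simp add: last_conv_nth)
  then show ?thesis
    by (auto simp: card_gt_0_iff)
qed

lemma foldl_red_step_all_addable:
  "\<forall>x\<in>set xs. fst x \<Longrightarrow> \<forall>x\<in>set st. fst x \<Longrightarrow> \<forall>x\<in>set (foldl red_step st xs). fst x"
proof (induction xs arbitrary: st)
  case Nil
  then show ?case by simp
next
  case (Cons a xs)
  obtain r where "a = (True, r)"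
    using Cons.prems(1) by (cases a) auto
  then have "\<forall>x\<in>set (red_step st a). fst x"
    using Cons.prems(2) by (auto dest: in_set_butlastD)
  then show ?case
    using Cons by simp
qed

text \<open>Every removable node sits at the end of its row, so if no row ends in an i-node the
  i-signature has no "-" at all.\<close>
lemma kash_e_None_if_no_row_end_res:
  assumes "\<And>r. r < length lam \<Longrightarrow> res r (lam ! r) \<noteq> i"
  shows "kash_e i lam = None"
proof -
  have "\<forall>x\<in>set (signature i lam). fst x"
    using assms unfolding signature_def row_sig_def removable_row_def part_def
    by (auto split: if_splits)
  then have "\<forall>x\<in>set (reduced_signature i lam). fst x"
    unfolding reduced_signature_def using foldl_red_step_all_addable[of _ "[]"] by simp
  then have "find (\<lambda>p. \<not> fst p) (reduced_signature i lam) = None"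
    by (fastforce simp: find_None_iff)
  then show ?thesis
    unfolding kash_e_def by simp
qed

theorem mainTheorem1:
  fixes lam :: "nat list"
  assumes "two_regular lam" and "alternating lam"
    and "lam \<noteq> []" and "odd (last lam)"
  shows "external lam"
proof -
  have row_end_res: "res r (lam ! r) = (if even (length lam) then 1 else 0)"
    if "r < length lam" for r
    using alternating_parity[OF assms(2-4) that] by (simp add: res_eq)
  have imbalance: "res_imbalance lam
      = (if even (length lam) then -1 else 1) * int (card {r. r < length lam \<and> odd (lam ! r)})"
    and odd_parts: "card {r. r < length lam \<and> odd (lam ! r)} > 0"
    using res_imbalance_alternating[OF assms(2-4)] card_odd_parts_pos[OF assms(3,4)] .
  show ?thesis
  proof (cases "even (length lam)")
    case True
    have "hub 1 lam < 0"
      using True imbalance odd_parts unfolding hub_1_eq by simp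
    moreover have "kash_e 0 lam = None"
      using True row_end_res by (intro kash_e_None_if_no_row_end_res) simp
    ultimately show ?thesis
      unfolding external_def by auto
  next
    case False
    have "hub 0 lam < 0"
      using False imbalance odd_parts unfolding hub_0_eq by simp
    moreover have "kash_e 1 lam = None"
      using False row_end_res by (intro kash_e_None_if_no_row_end_res) simp
    ultimately show ?thesis
      unfolding external_def by auto
  qed
qed

end
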